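(* Let $(A,\succ,\prec)$ be an anti-pre-Novikov algebra and $s\in A\otimes A$ define a factorizable anti-pre-Novikov bialgebra $(A,\succ,\prec,\Delta_{\succ,s},\Delta_{\prec,s})$. Consider the direct sum anti-pre-Novikov algebra $A\oplus A$ (componentwise operations) and the linear map $T_s\oplus T_{\tau(s)}:A^*\to A\oplus A$, $\zeta\mapsto(T_s(\zeta),-T_{\tau(s)}(\zeta))$. Then $\mathrm{Im}(T_s\oplus T_{\tau(s)})$ is an anti-pre-Novikov subalgebra of $A\oplus A$ isomorphic to the anti-pre-Novikov algebra $(A^*,\succ_s,\prec_s)$. Furthermore, every $x\in A$ has a unique decomposition $x=x_1-x_2$ with $(x_1,x_2)\in\mathrm{Im}(T_s\oplus T_{\tau(s)})$.
   Context: $A$ is finite-dimensional over a field $k$. An anti-pre-Novikov algebra is $(A,\succ,\prec)$ such that with $x\circ y=x\succ y+x\prec y$: $(x\circ y-y\circ x)\succ z=y\succ(x\succ z)-x\succ(y\succ z)$; $x\prec(y\circ z)=(y\succ x)\prec z-(x\prec y)\prec z-y\succ(x\prec z)$; $(x\circ y)\succ z=-(x\succ z)\prec y$; $(x\prec y)\prec z=(x\prec z)\prec y$; $(x\circ y-y\circ x)\prec z=x\succ(y\circ z)-y\succ(x\circ z)$. Notation: $x\odot y=x\succ y+y\prec x$; $L_\ast(x)y=x\ast y$, $R_\ast(x)y=y\ast x$; $L_{\star}=L_{\circ}+R_{\circ}$, $L_{\odot}=L_{\succ}+R_{\prec}$, $R_{\odot}=R_{\succ}+L_{\prec}$; for $f:A\to\mathrm{End}(A)$,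 $\langle f^*(x)\zeta,y\rangle=-\langle\zeta,f(x)y\rangle$; $\tau$ is the flip; $T_r:A^*\to A$, $\langle T_r(\zeta),\eta\rangle=\langle r,\zeta\otimes\eta\rangle$. $r$ is invariant if $(I\otimes L_{\star}(x)-L_{\succ}(x)\otimes I)r=0$ and $(L_{\circ}(x)\otimes I-I\otimes L_{\odot}(x))r=0$ for all $x$. For $s=\sum_i a_i\otimes b_i$ the APN-YBE is $\sum_{i,j}a_i\circ a_j\otimes b_i\otimes b_j+\sum_{i,j}a_j\otimes a_i\otimes(b_i\odot b_j)+\sum_{i,j}a_i\otimes(b_i\prec a_j)\otimes b_j=0$. With $\Delta_{\succ,s}(x)=(I\otimes L_{\star}(x)-L_{\succ}(x)\otimes I)s$, $\Delta_{\prec,s}(x)=(L_{\circ}(x)\otimes I-I\otimes L_{\odot}(x))s$, the datum $(A,\succ,\prec,\Delta_{\succ,s},\Delta_{\prec,s})$ is a factorizable anti-pre-Novikov bialgebra when $s$ solves the APN-YBE, $s+\tau(s)$ is invariant and $T_{s+\tau(s)}$ is a linear isomorphism. The operations on $A^*$ dual to $\Delta_{\succ,s},\Delta_{\prec,s}$ are $\zeta\succ_s\eta=R_{\succ}^*(T_{\tau(s)}(\eta))\zeta-L_{\star}^*(T_s(\zeta))\eta$ and $\zeta\prec_s\eta=R_{\odot}^*(T_s(\zeta))\eta-R_{\circ}^*(T_{\tau(s)}(\eta))\zeta$. *)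

theory Defs
  imports Main
begin

text \<open>The finite-dimensional space A over the field 'k is represented in
coordinates as 'n \<Rightarrow> 'k for a finite index type 'n (standard basis ebasis i).
The dual space A* is also represented as 'n \<Rightarrow> 'k, via the pairing
dpair zeta x = sum_i zeta i * x i (dual basis).  A tensor r in A \<otimes> A is represented by its
coefficient matrix r i j (r = sum_{i,j} r i j e_i \<otimes> e_j); triple tensors analogously.\<close>

definition vadd :: "('n \<Rightarrow> 'k::field) \<Rightarrow> ('n \<Rightarrow> 'k) \<Rightarrow> ('n \<Rightarrow> 'k)" where
  "vadd x y = (\<lambda>i. x i + y i)"
definition vsub :: "('n \<Rightarrow> 'k::field) \<Rightarrow> ('n \<Rightarrow> 'k) \<Rightarrow> ('n \<Rightarrow> 'k)" where
  "vsub x y = (\<lambda>i. x i - y i)"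
definition vneg :: "('n \<Rightarrow> 'k::field) \<Rightarrow> ('n \<Rightarrow> 'k)" where
  "vneg x = (\<lambda>i. - x i)"
definition vzero :: "'n \<Rightarrow> 'k::field" where
  "vzero = (\<lambda>i. 0)"
definition smul :: "'k::field \<Rightarrow> ('n \<Rightarrow> 'k) \<Rightarrow> ('n \<Rightarrow> 'k)" where
  "smul c x = (\<lambda>i. c * x i)"

definition lin_map :: "(('n \<Rightarrow> 'k::field) \<Rightarrow> ('m \<Rightarrow> 'k)) \<Rightarrow> bool" where
  "lin_map f \<longleftrightarrow> (\<forall>x y. f (vadd x y) = vadd (f x) (f y)) \<and> (\<forall>c x. f (smul c x) = smul c (f x))"

definition bilinear_op :: "(('n \<Rightarrow> 'k::field) \<Rightarrow> ('n \<Rightarrow> 'k) \<Rightarrow> ('n \<Rightarrow> 'k)) \<Rightarrow> bool" where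
  "bilinear_op m \<longleftrightarrow> (\<forall>y. lin_map (\<lambda>x. m x y)) \<and> (\<forall>x. lin_map (m x))"

definition circ :: "(('n \<Rightarrow> 'k::field) \<Rightarrow> ('n \<Rightarrow> 'k) \<Rightarrow> ('n \<Rightarrow> 'k)) \<Rightarrow> (('n \<Rightarrow> 'k) \<Rightarrow> ('n \<Rightarrow> 'k) \<Rightarrow> ('n \<Rightarrow> 'k))
   \<Rightarrow> ('n \<Rightarrow> 'k) \<Rightarrow> ('n \<Rightarrow> 'k) \<Rightarrow> ('n \<Rightarrow> 'k)" where
  "circ sc pr x y = vadd (sc x y) (pr x y)"
definition odot :: "(('n \<Rightarrow> 'k::field) \<Rightarrow> ('n \<Rightarrow> 'k) \<Rightarrow> ('n \<Rightarrow> 'k)) \<Rightarrow> (('n \<Rightarrow> 'k) \<Rightarrow> ('n \<Rightarrow> 'k) \<Rightarrow> ('n \<Rightarrow> 'k))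
   \<Rightarrow> ('n \<Rightarrow> 'k) \<Rightarrow> ('n \<Rightarrow> 'k) \<Rightarrow> ('n \<Rightarrow> 'k)" where
  "odot sc pr x y = vadd (sc x y) (pr y x)"

definition anti_pre_Novikov :: "(('n \<Rightarrow> 'k::field) \<Rightarrow> ('n \<Rightarrow> 'k) \<Rightarrow> ('n \<Rightarrow> 'k)) \<Rightarrow> (('n \<Rightarrow> 'k) \<Rightarrow> ('n \<Rightarrow> 'k) \<Rightarrow> ('n \<Rightarrow> 'k)) \<Rightarrow> bool" where
  "anti_pre_Novikov sc pr \<longleftrightarrow> bilinear_op sc \<and> bilinear_op pr \<and>
    (\<forall>x y z.
      sc (vsub (circ sc pr x y) (circ sc pr y x)) z = vsub (sc y (sc x z)) (sc x (sc y z)) \<and>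
      pr x (circ sc pr y z) = vsub (vsub (pr (sc y x) z) (pr (pr x y) z)) (sc y (pr x z)) \<and>
      sc (circ sc pr x y) z = vneg (pr (sc x z) y) \<and>
      pr (pr x y) z = pr (pr x z) y \<and>
      pr (vsub (circ sc pr x y) (circ sc pr y x)) z = vsub (sc x (circ sc pr y z)) (sc y (circ sc pr x z)))"

definition ebasis :: "'n \<Rightarrow> 'n \<Rightarrow> 'k::field" where
  "ebasis i = (\<lambda>j. if j = i then 1 else 0)"

definition dpair :: "('n::finite \<Rightarrow> 'k::field) \<Rightarrow> ('n \<Rightarrow> 'k) \<Rightarrow> 'k" where
  "dpair zeta x = (\<Sum>i\<in>UNIV. zeta i * x i)"

text \<open>T_r : A* \<rightarrow> A, characterised by dpair (Tmap r zeta) eta = <r, zeta \<otimes> eta>\<close>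
definition Tmap :: "('n::finite \<Rightarrow> 'n \<Rightarrow> 'k::field) \<Rightarrow> ('n \<Rightarrow> 'k) \<Rightarrow> ('n \<Rightarrow> 'k)" where
  "Tmap r zeta = (\<lambda>j. \<Sum>i\<in>UNIV. r i j * zeta i)"

definition flip :: "('n \<Rightarrow> 'n \<Rightarrow> 'k) \<Rightarrow> ('n \<Rightarrow> 'n \<Rightarrow> 'k)" where
  "flip r = (\<lambda>i j. r j i)"

definition tsum2 :: "('n \<Rightarrow> 'n \<Rightarrow> 'k::field) \<Rightarrow> ('n \<Rightarrow> 'n \<Rightarrow> 'k) \<Rightarrow> ('n \<Rightarrow> 'n \<Rightarrow> 'k)" where
  "tsum2 r t = (\<lambda>i j. r i j + t i j)"

definition tensor_map :: "(('n::finite \<Rightarrow> 'k::field) \<Rightarrow> ('n \<Rightarrow> 'k)) \<Rightarrow> (('n \<Rightarrow> 'k) \<Rightarrow> ('n \<Rightarrow> 'k))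
    \<Rightarrow> ('n \<Rightarrow> 'n \<Rightarrow> 'k) \<Rightarrow> ('n \<Rightarrow> 'n \<Rightarrow> 'k)" where
  "tensor_map f g r = (\<lambda>u v. \<Sum>p\<in>UNIV. \<Sum>q\<in>UNIV. r p q * f (ebasis p) u * g (ebasis q) v)"

definition tens3 :: "('n \<Rightarrow> 'k::field) \<Rightarrow> ('n \<Rightarrow> 'k) \<Rightarrow> ('n \<Rightarrow> 'k) \<Rightarrow> ('n \<Rightarrow> 'n \<Rightarrow> 'n \<Rightarrow> 'k)" where
  "tens3 a b c = (\<lambda>u v w. a u * b v * c w)"

definition Lstar where "Lstar sc pr x = (\<lambda>y. vadd (circ sc pr x y) (circ sc pr y x))"
definition Lodot where "Lodot sc pr x = (\<lambda>y. odot sc pr x y)"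
definition Rodot where "Rodot sc pr x = (\<lambda>y. odot sc pr y x)"
definition Rcirc where "Rcirc sc pr x = (\<lambda>y. circ sc pr y x)"
definition Rop where "Rop m x = (\<lambda>y. m y x)"

definition invariant :: "(('n::finite \<Rightarrow> 'k::field) \<Rightarrow> ('n \<Rightarrow> 'k) \<Rightarrow> ('n \<Rightarrow> 'k)) \<Rightarrow> (('n \<Rightarrow> 'k) \<Rightarrow> ('n \<Rightarrow> 'k) \<Rightarrow> ('n \<Rightarrow> 'k))
    \<Rightarrow> ('n \<Rightarrow> 'n \<Rightarrow> 'k) \<Rightarrow> bool" where
  "invariant sc pr r \<longleftrightarrow> (\<forall>x.
     tensor_map id (Lstar sc pr x) r = tensor_map (sc x) id r \<and>
     tensor_map (circ sc pr x) id r = tensor_map id (Lodot sc pr x) r)"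

text \<open>APN-YBE for s = sum_{p,q} s p q e_p \<otimes> e_q (so a_i = e_p, b_i = e_q with weight s p q).\<close>
definition APN_YBE :: "(('n::finite \<Rightarrow> 'k::field) \<Rightarrow> ('n \<Rightarrow> 'k) \<Rightarrow> ('n \<Rightarrow> 'k)) \<Rightarrow> (('n \<Rightarrow> 'k) \<Rightarrow> ('n \<Rightarrow> 'k) \<Rightarrow> ('n \<Rightarrow> 'k))
    \<Rightarrow> ('n \<Rightarrow> 'n \<Rightarrow> 'k) \<Rightarrow> bool" where
  "APN_YBE sc pr s \<longleftrightarrow> (\<forall>u v w.
     (\<Sum>p\<in>UNIV. \<Sum>q\<in>UNIV. \<Sum>p'\<in>UNIV. \<Sum>q'\<in>UNIV. s p q * s p' q' *
        (tens3 (circ sc pr (ebasis p) (ebasis p')) (ebasis q) (ebasis q') u v w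
       + tens3 (ebasis p') (ebasis p) (odot sc pr (ebasis q) (ebasis q')) u v w
       + tens3 (ebasis p) (pr (ebasis q) (ebasis p')) (ebasis q') u v w)) = 0)"

definition factorizable :: "(('n::finite \<Rightarrow> 'k::field) \<Rightarrow> ('n \<Rightarrow> 'k) \<Rightarrow> ('n \<Rightarrow> 'k)) \<Rightarrow> (('n \<Rightarrow> 'k) \<Rightarrow> ('n \<Rightarrow> 'k) \<Rightarrow> ('n \<Rightarrow> 'k))
    \<Rightarrow> ('n \<Rightarrow> 'n \<Rightarrow> 'k) \<Rightarrow> bool" where
  "factorizable sc pr s \<longleftrightarrow> APN_YBE sc pr s \<and> invariant sc pr (tsum2 s (flip s))
     \<and> bij (Tmap (tsum2 s (flip s)))"

text \<open>f^*(x) zeta, defined by <f^*(x) zeta, y> = - <zeta, f(x) y>\<close>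
definition dual_rep :: "(('n::finite \<Rightarrow> 'k::field) \<Rightarrow> ('n \<Rightarrow> 'k) \<Rightarrow> ('n \<Rightarrow> 'k)) \<Rightarrow> ('n \<Rightarrow> 'k) \<Rightarrow> ('n \<Rightarrow> 'k) \<Rightarrow> ('n \<Rightarrow> 'k)" where
  "dual_rep f x zeta = (\<lambda>j. - dpair zeta (f x (ebasis j)))"

definition dual_succ where
  "dual_succ sc pr s zeta eta =
     vsub (dual_rep (Rop sc) (Tmap (flip s) eta) zeta) (dual_rep (Lstar sc pr) (Tmap s zeta) eta)"
definition dual_prec where
  "dual_prec sc pr s zeta eta =
     vsub (dual_rep (Rodot sc pr) (Tmap s zeta) eta) (dual_rep (Rcirc sc pr) (Tmap (flip s) eta) zeta)"

definition dsum_op :: "(('n \<Rightarrow> 'k) \<Rightarrow> ('n \<Rightarrow> 'k) \<Rightarrow> ('n \<Rightarrow> 'k)) \<Rightarrow> ('n \<Rightarrow> 'k) \<times> ('n \<Rightarrow> 'k) \<Rightarrow> ('n \<Rightarrow> 'k) \<times> ('n \<Rightarrow> 'k) \<Rightarrow> ('n \<Rightarrow> 'k) \<times> ('n \<Rightarrow> 'k)" where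
  "dsum_op m a b = (m (fst a) (fst b), m (snd a) (snd b))"
definition padd :: "('n \<Rightarrow> 'k::field) \<times> ('n \<Rightarrow> 'k) \<Rightarrow> ('n \<Rightarrow> 'k) \<times> ('n \<Rightarrow> 'k) \<Rightarrow> ('n \<Rightarrow> 'k) \<times> ('n \<Rightarrow> 'k)" where
  "padd a b = (vadd (fst a) (fst b), vadd (snd a) (snd b))"
definition psmul :: "'k::field \<Rightarrow> ('n \<Rightarrow> 'k) \<times> ('n \<Rightarrow> 'k) \<Rightarrow> ('n \<Rightarrow> 'k) \<times> ('n \<Rightarrow> 'k)" where
  "psmul c a = (smul c (fst a), smul c (snd a))"

definition APN_subalgebra_dsum where
  "APN_subalgebra_dsum sc pr S \<longleftrightarrow> (vzero, vzero) \<in> S \<and>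
     (\<forall>a\<in>S. \<forall>b\<in>S. padd a b \<in> S) \<and> (\<forall>c. \<forall>a\<in>S. psmul c a \<in> S) \<and>
     (\<forall>a\<in>S. \<forall>b\<in>S. dsum_op sc a b \<in> S \<and> dsum_op pr a b \<in> S)"

definition APN_iso_dual_onto where
  "APN_iso_dual_onto sc pr s S \<longleftrightarrow> (\<exists>phi.
     (\<forall>x y. phi (vadd x y) = padd (phi x) (phi y)) \<and> (\<forall>c x. phi (smul c x) = psmul c (phi x)) \<and>
     bij_betw phi UNIV S \<and>
     (\<forall>zeta eta. phi (dual_succ sc pr s zeta eta) = dsum_op sc (phi zeta) (phi eta) \<and>
                phi (dual_prec sc pr s zeta eta) = dsum_op pr (phi zeta) (phi eta)))"

end

theory Submission
  imports Defs "HOL-Library.Function_Algebras"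
begin

text \<open>Put r = s + \<tau>(s), so that T_r = T_s + T_\<tau>(s) is bijective and r is symmetric and invariant.
  Paired with an arbitrary functional, the APN-YBE for s and the invariance of r become scalar
  identities; combining them (and using surjectivity of T_r to move T_r from one factor of a
  product to the other) shows that T_s and -T_\<tau>(s) are both homomorphisms from
  (A*, \<succ>_s, \<prec>_s) to (A, \<succ>, \<prec>). So \<phi> = (T_s, -T_\<tau>(s)) is a homomorphism into A \<oplus> A whose
  two components differ by the bijection T_r: \<phi> is injective, and x = x1 - x2 has exactly one
  solution (x1, x2) in its image.\<close>

section \<open>Linear algebra in coordinates\<close>

lemma vector_ops_eq_fun_ops: "vadd x y = x + y" "vsub x y = x - y" "vneg x = - x" "vzero = 0"
  by (auto simp: vadd_def vsub_def vneg_def vzero_def fun_eq_iff)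

lemma lin_map_add: "lin_map f \<Longrightarrow> f (x + y) = f x + f y"
  unfolding lin_map_def vector_ops_eq_fun_ops[symmetric] by blast

lemma lin_map_smul: "lin_map f \<Longrightarrow> f (\<lambda>i. c * x i) = (\<lambda>i. c * f x i)"
  unfolding lin_map_def smul_def by blast

lemma lin_map_zero: "lin_map f \<Longrightarrow> f 0 = 0"
  using lin_map_smul[of f 0 0] by (simp add: zero_fun_def)

lemma lin_map_uminus: "lin_map f \<Longrightarrow> f (- x) = - f x"
  using lin_map_smul[of f "-1" x] by (simp add: fun_Compl_def)

lemma lin_map_plus: "lin_map f \<Longrightarrow> lin_map g \<Longrightarrow> lin_map (\<lambda>y. vadd (f y) (g y))"
  unfolding lin_map_def vadd_def smul_def by (simp add: algebra_simps)

lemma lin_map_sum_ebasis: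
  assumes "lin_map f" and "finite S"
  shows "f (\<lambda>j. \<Sum>i\<in>S. x i * ebasis i j) = (\<lambda>j. \<Sum>i\<in>S. x i * f (ebasis i) j)"
  using assms(2)
proof (induction S rule: finite_induct)
  case empty
  then show ?case using lin_map_zero[OF assms(1)] by (simp add: zero_fun_def)
next
  case (insert k S)
  have "(\<lambda>j. \<Sum>i\<in>insert k S. x i * ebasis i j)
      = (\<lambda>j. x k * ebasis k j) + (\<lambda>j. \<Sum>i\<in>S. x i * ebasis i j)"
    using insert.hyps by (simp add: plus_fun_def)
  then have "f (\<lambda>j. \<Sum>i\<in>insert k S. x i * ebasis i j)
      = (\<lambda>j. x k * f (ebasis k) j) + (\<lambda>j. \<Sum>i\<in>S. x i * f (ebasis i) j)"
    using insert.IH lin_map_add[OF assms(1)] lin_map_smul[OF assms(1)] by simp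
  then show ?case using insert.hyps by (simp add: plus_fun_def)
qed

lemma ebasis_eq_of_bool: "ebasis i j = of_bool (j = i)"
  by (simp add: ebasis_def)

lemma sum_ebasis: "(\<lambda>j. \<Sum>i\<in>UNIV. x i * ebasis i j) = (x :: 'n::finite \<Rightarrow> 'k::field)"
  by (simp add: fun_eq_iff ebasis_eq_of_bool)

lemma lin_map_expand:
  assumes "lin_map (f :: ('n::finite \<Rightarrow> 'k::field) \<Rightarrow> 'm \<Rightarrow> 'k)"
  shows "f x j = (\<Sum>i\<in>UNIV. x i * f (ebasis i) j)"
  using lin_map_sum_ebasis[OF assms finite_UNIV, of x] by (simp add: sum_ebasis)

lemma dpair_add_right: "dpair z (x + y) = dpair z x + dpair z y"
  by (simp add: dpair_def algebra_simps sum.distrib)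

lemma dpair_diff_right: "dpair z (x - y) = dpair z x - dpair z y"
  by (simp add: dpair_def algebra_simps sum_subtractf)

lemma dpair_uminus_right: "dpair z (- x) = - dpair z x"
  by (simp add: dpair_def sum_negf)

lemma dpair_diff_left: "dpair (z - w) x = dpair z x - dpair w x"
  by (simp add: dpair_def algebra_simps sum_subtractf)

lemma dpair_ebasis: "dpair (ebasis i) x = x i" "dpair z (ebasis i) = z i"
  by (simp_all add: dpair_def ebasis_eq_of_bool)

lemma dpair_ext: "(\<And>t. dpair t x = dpair t y) \<Longrightarrow> x = (y :: 'n::finite \<Rightarrow> 'k::field)"
  by (rule ext) (metis dpair_ebasis(1))

lemma dpair_lin_map:
  fixes f :: "('n::finite \<Rightarrow> 'k::field) \<Rightarrow> ('n \<Rightarrow> 'k)"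
  assumes "lin_map f"
  shows "dpair z (f x) = (\<Sum>i\<in>UNIV. x i * dpair z (f (ebasis i)))"
proof -
  have "dpair z (f x) = (\<Sum>j\<in>UNIV. \<Sum>i\<in>UNIV. x i * (z j * f (ebasis i) j))"
    unfolding dpair_def lin_map_expand[OF assms, of x] by (simp add: sum_distrib_left mult_ac)
  also have "\<dots> = (\<Sum>i\<in>UNIV. \<Sum>j\<in>UNIV. x i * (z j * f (ebasis i) j))"
    by (rule sum.swap)
  also have "\<dots> = (\<Sum>i\<in>UNIV. x i * dpair z (f (ebasis i)))"
    by (simp add: dpair_def sum_distrib_left)
  finally show ?thesis .
qed

lemma dpair_dual_rep:
  fixes f :: "('n::finite \<Rightarrow> 'k::field) \<Rightarrow> ('n \<Rightarrow> 'k) \<Rightarrow> ('n \<Rightarrow> 'k)"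
  assumes "lin_map (f a)"
  shows "dpair (dual_rep f a z) x = - dpair z (f a x)"
  unfolding dpair_lin_map[OF assms, of z x]
  by (simp add: dual_rep_def dpair_def sum_negf mult_ac)

lemma flip_flip: "flip (flip s) = s"
  by (simp add: flip_def)

lemma flip_tsum2_flip: "flip (tsum2 s (flip s)) = tsum2 s (flip s)"
  by (simp add: flip_def tsum2_def fun_eq_iff add.commute)

lemma Tmap_apply: "Tmap s b i = (\<Sum>p\<in>UNIV. s p i * b p)"
  by (simp add: Tmap_def)

lemma Tmap_flip_apply: "Tmap (flip s) b i = (\<Sum>q\<in>UNIV. s i q * b q)"
  by (simp add: Tmap_def flip_def)

lemma Tmap_add: "Tmap r (x + y) = Tmap r x + Tmap r y"
  by (simp add: Tmap_def fun_eq_iff algebra_simps sum.distrib)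

lemma Tmap_smul: "Tmap r (\<lambda>i. c * x i) = (\<lambda>i. c * Tmap r x i)"
  by (simp add: Tmap_def fun_eq_iff sum_distrib_left mult_ac)

lemma Tmap_tsum2: "Tmap (tsum2 s t) x = Tmap s x + Tmap t x"
  by (simp add: Tmap_def tsum2_def fun_eq_iff algebra_simps sum.distrib)

lemma dpair_Tmap: "dpair t (Tmap r z) = dpair z (Tmap (flip r) t)"
proof -
  have "dpair t (Tmap r z) = (\<Sum>j\<in>UNIV. \<Sum>i\<in>UNIV. t j * r i j * z i)"
    unfolding dpair_def Tmap_def by (simp add: sum_distrib_left mult_ac)
  also have "\<dots> = (\<Sum>i\<in>UNIV. \<Sum>j\<in>UNIV. t j * r i j * z i)"
    by (rule sum.swap)
  also have "\<dots> = dpair z (Tmap (flip r) t)"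
    unfolding dpair_def Tmap_def flip_def by (simp add: sum_distrib_left mult_ac)
  finally show ?thesis .
qed

lemma bilinear_op_lin_map: "bilinear_op m \<Longrightarrow> lin_map (\<lambda>x. m x y)" "bilinear_op m \<Longrightarrow> lin_map (m x)"
  unfolding bilinear_op_def by auto

lemma bilinear_op_add: "bilinear_op m \<Longrightarrow> m (x + y) z = m x z + m y z"
    "bilinear_op m \<Longrightarrow> m z (x + y) = m z x + m z y"
  by (auto dest: bilinear_op_lin_map intro: lin_map_add)

lemma bilinear_op_uminus: "bilinear_op m \<Longrightarrow> m (- x) z = - m x z"
    "bilinear_op m \<Longrightarrow> m z (- x) = - m z x"
  by (auto dest: bilinear_op_lin_map intro: lin_map_uminus)

lemma bilinear_op_circ: "bilinear_op sc \<Longrightarrow> bilinear_op pr \<Longrightarrow> bilinear_op (circ sc pr)"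
  unfolding bilinear_op_def circ_def by (auto intro: lin_map_plus)

lemma bilinear_op_odot: "bilinear_op sc \<Longrightarrow> bilinear_op pr \<Longrightarrow> bilinear_op (odot sc pr)"
  unfolding bilinear_op_def odot_def by (auto intro: lin_map_plus)

lemma lin_map_Lstar: "bilinear_op sc \<Longrightarrow> bilinear_op pr \<Longrightarrow> lin_map (Lstar sc pr x)"
  unfolding Lstar_def by (intro lin_map_plus bilinear_op_lin_map bilinear_op_circ)

lemma lin_map_Lodot: "bilinear_op sc \<Longrightarrow> bilinear_op pr \<Longrightarrow> lin_map (Lodot sc pr x)"
  unfolding Lodot_def using bilinear_op_lin_map(2)[OF bilinear_op_odot] by blast

lemma anti_pre_Novikov_bilinear:
  "anti_pre_Novikov sc pr \<Longrightarrow> bilinear_op sc" "anti_pre_Novikov sc pr \<Longrightarrow> bilinear_op pr"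
  unfolding anti_pre_Novikov_def by auto

lemma dpair_bilinear_op:
  fixes m :: "('n::finite \<Rightarrow> 'k::field) \<Rightarrow> ('n \<Rightarrow> 'k) \<Rightarrow> ('n \<Rightarrow> 'k)"
  assumes "bilinear_op m"
  shows "dpair z (m x y) = (\<Sum>i\<in>UNIV. \<Sum>j\<in>UNIV. x i * y j * dpair z (m (ebasis i) (ebasis j)))"
  by (subst dpair_lin_map[OF bilinear_op_lin_map(1)[OF assms]],
      subst dpair_lin_map[OF bilinear_op_lin_map(2)[OF assms]])
    (simp add: sum_distrib_left mult_ac)

section \<open>Contraction of tensors with functionals\<close>

definition contract3 :: "('n::finite \<Rightarrow> 'k::field) \<Rightarrow> ('n \<Rightarrow> 'k) \<Rightarrow> ('n \<Rightarrow> 'k) \<Rightarrow> ('n \<Rightarrow> 'n \<Rightarrow> 'n \<Rightarrow> 'k) \<Rightarrow> 'k" where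
  "contract3 a b c X = (\<Sum>u\<in>UNIV. \<Sum>v\<in>UNIV. \<Sum>w\<in>UNIV. a u * b v * c w * X u v w)"

lemma contract3_add: "contract3 a b c (\<lambda>u v w. X u v w + Y u v w) = contract3 a b c X + contract3 a b c Y"
  by (simp add: contract3_def algebra_simps sum.distrib)

lemma contract3_cmult: "contract3 a b c (\<lambda>u v w. k * X u v w) = k * contract3 a b c X"
  by (simp add: contract3_def sum_distrib_left mult_ac)

lemma contract3_zero: "contract3 a b c (\<lambda>u v w. 0) = 0"
  by (simp add: contract3_def)

lemma contract3_sum: "contract3 a b c (\<lambda>u v w. \<Sum>p\<in>UNIV. X p u v w) = (\<Sum>p\<in>UNIV. contract3 a b c (X p))"
proof -
  have "contract3 a b c (\<lambda>u v w. \<Sum>p\<in>UNIV. X p u v w)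
      = (\<Sum>u\<in>UNIV. \<Sum>v\<in>UNIV. \<Sum>w\<in>UNIV. \<Sum>p\<in>UNIV. a u * b v * c w * X p u v w)"
    by (simp add: contract3_def sum_distrib_left)
  also have "\<dots> = (\<Sum>u\<in>UNIV. \<Sum>v\<in>UNIV. \<Sum>p\<in>UNIV. \<Sum>w\<in>UNIV. a u * b v * c w * X p u v w)"
    by (rule sum.cong[OF refl], rule sum.cong[OF refl], rule sum.swap)
  also have "\<dots> = (\<Sum>u\<in>UNIV. \<Sum>p\<in>UNIV. \<Sum>v\<in>UNIV. \<Sum>w\<in>UNIV. a u * b v * c w * X p u v w)"
    by (rule sum.cong[OF refl], rule sum.swap)
  also have "\<dots> = (\<Sum>p\<in>UNIV. \<Sum>u\<in>UNIV. \<Sum>v\<in>UNIV. \<Sum>w\<in>UNIV. a u * b v * c w * X p u v w)"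
    by (rule sum.swap)
  finally show ?thesis by (simp add: contract3_def)
qed

lemma sum_product_mult:
  "(\<Sum>q\<in>UNIV. A q) * (\<Sum>q'\<in>UNIV. B q') * (C::'k::field) = (\<Sum>q\<in>UNIV. \<Sum>q'\<in>UNIV. A q * B q' * C)"
  unfolding sum_product by (simp only: sum_distrib_right)

lemma contract3_tens3: "contract3 a b c (tens3 x y z) = dpair a x * dpair b y * dpair c z"
proof -
  have "dpair a x * dpair b y * dpair c z = (\<Sum>u\<in>UNIV. \<Sum>v\<in>UNIV. (a u * x u) * (b v * y v) * dpair c z)"
    unfolding dpair_def[of a x] dpair_def[of b y] by (rule sum_product_mult)
  also have "\<dots> = (\<Sum>u\<in>UNIV. \<Sum>v\<in>UNIV. \<Sum>w\<in>UNIV. (a u * x u) * (b v * y v) * (c w * z w))"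
    by (simp only: dpair_def sum_distrib_left)
  finally show ?thesis by (simp add: contract3_def tens3_def mult_ac)
qed

lemma contract_tensor_map:
  "(\<Sum>u\<in>UNIV. \<Sum>v\<in>UNIV. a u * b v * tensor_map f g r u v)
    = (\<Sum>p\<in>UNIV. \<Sum>q\<in>UNIV. r p q * dpair a (f (ebasis p)) * dpair b (g (ebasis q)))"
proof -
  let ?t = "\<lambda>u v p q. r p q * (a u * f (ebasis p) u) * (b v * g (ebasis q) v)"
  have "(\<Sum>u\<in>UNIV. \<Sum>v\<in>UNIV. a u * b v * tensor_map f g r u v)
      = (\<Sum>u\<in>UNIV. \<Sum>v\<in>UNIV. \<Sum>p\<in>UNIV. \<Sum>q\<in>UNIV. ?t u v p q)"
    unfolding tensor_map_def by (simp add: sum_distrib_left mult_ac)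
  also have "\<dots> = (\<Sum>u\<in>UNIV. \<Sum>p\<in>UNIV. \<Sum>v\<in>UNIV. \<Sum>q\<in>UNIV. ?t u v p q)"
    by (rule sum.cong[OF refl], rule sum.swap)
  also have "\<dots> = (\<Sum>p\<in>UNIV. \<Sum>u\<in>UNIV. \<Sum>v\<in>UNIV. \<Sum>q\<in>UNIV. ?t u v p q)"
    by (rule sum.swap)
  also have "\<dots> = (\<Sum>p\<in>UNIV. \<Sum>u\<in>UNIV. \<Sum>q\<in>UNIV. \<Sum>v\<in>UNIV. ?t u v p q)"
    by (rule sum.cong[OF refl], rule sum.cong[OF refl], rule sum.swap)
  also have "\<dots> = (\<Sum>p\<in>UNIV. \<Sum>q\<in>UNIV. \<Sum>u\<in>UNIV. \<Sum>v\<in>UNIV. ?t u v p q)"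
    by (rule sum.cong[OF refl], rule sum.swap)
  also have "\<dots> = (\<Sum>p\<in>UNIV. \<Sum>q\<in>UNIV. r p q * dpair a (f (ebasis p)) * dpair b (g (ebasis q)))"
    unfolding dpair_def by (simp add: sum_distrib_left sum_distrib_right mult_ac)
  finally show ?thesis .
qed

lemma contract_tensor_map_id_left:
  fixes g :: "('n::finite \<Rightarrow> 'k::field) \<Rightarrow> ('n \<Rightarrow> 'k)"
  assumes "lin_map g"
  shows "(\<Sum>u\<in>UNIV. \<Sum>v\<in>UNIV. a u * b v * tensor_map id g r u v) = dpair b (g (Tmap r a))"
proof -
  have "(\<Sum>u\<in>UNIV. \<Sum>v\<in>UNIV. a u * b v * tensor_map id g r u v)
      = (\<Sum>q\<in>UNIV. \<Sum>p\<in>UNIV. r p q * a p * dpair b (g (ebasis q)))"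
    unfolding contract_tensor_map id_def dpair_ebasis by (rule sum.swap)
  also have "\<dots> = (\<Sum>q\<in>UNIV. Tmap r a q * dpair b (g (ebasis q)))"
    by (simp add: Tmap_def sum_distrib_left sum_distrib_right mult_ac)
  also have "\<dots> = dpair b (g (Tmap r a))"
    by (rule dpair_lin_map[OF assms, symmetric])
  finally show ?thesis .
qed

lemma contract_tensor_map_id_right:
  fixes f :: "('n::finite \<Rightarrow> 'k::field) \<Rightarrow> ('n \<Rightarrow> 'k)"
  assumes "lin_map f"
  shows "(\<Sum>u\<in>UNIV. \<Sum>v\<in>UNIV. a u * b v * tensor_map f id r u v) = dpair a (f (Tmap (flip r) b))"
proof -
  have "(\<Sum>u\<in>UNIV. \<Sum>v\<in>UNIV. a u * b v * tensor_map f id r u v)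
      = (\<Sum>p\<in>UNIV. Tmap (flip r) b p * dpair a (f (ebasis p)))"
    unfolding contract_tensor_map
    by (simp add: dpair_ebasis Tmap_def flip_def sum_distrib_left sum_distrib_right mult_ac)
  also have "\<dots> = dpair a (f (Tmap (flip r) b))"
    by (rule dpair_lin_map[OF assms, symmetric])
  finally show ?thesis .
qed

lemma sum2_product_sums:
  "(\<Sum>i\<in>UNIV. \<Sum>j\<in>UNIV. (\<Sum>k\<in>UNIV. A i k) * (\<Sum>l\<in>UNIV. B j l) * (C i j :: 'k::field))
    = (\<Sum>i\<in>UNIV. \<Sum>k\<in>UNIV. \<Sum>j\<in>UNIV. \<Sum>l\<in>UNIV. A i k * B j l * C i j)"
  by (simp only: sum_product_mult) (rule sum.cong[OF refl], rule sum.swap)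

section \<open>Invariance and the APN-YBE tested against functionals\<close>

lemma APN_YBE_contracted:
  fixes sc pr :: "('n::finite \<Rightarrow> 'k::field) \<Rightarrow> ('n \<Rightarrow> 'k) \<Rightarrow> ('n \<Rightarrow> 'k)"
  assumes "APN_YBE sc pr s"
  shows "(\<Sum>p\<in>UNIV. \<Sum>q\<in>UNIV. \<Sum>p'\<in>UNIV. \<Sum>q'\<in>UNIV. s p q * s p' q' *
           (dpair a (circ sc pr (ebasis p) (ebasis p')) * b q * c q'
          + a p' * b p * dpair c (odot sc pr (ebasis q) (ebasis q'))
          + a p * dpair b (pr (ebasis q) (ebasis p')) * c q')) = 0"
proof -
  let ?e = "ebasis :: 'n \<Rightarrow> 'n \<Rightarrow> 'k"
  have "(\<lambda>u v w. \<Sum>p\<in>UNIV. \<Sum>q\<in>UNIV. \<Sum>p'\<in>UNIV. \<Sum>q'\<in>UNIV. s p q * s p' q' *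
          (tens3 (circ sc pr (?e p) (?e p')) (?e q) (?e q') u v w
         + tens3 (?e p') (?e p) (odot sc pr (?e q) (?e q')) u v w
         + tens3 (?e p) (pr (?e q) (?e p')) (?e q') u v w)) = (\<lambda>u v w. 0)"
    using assms unfolding APN_YBE_def by (simp add: fun_eq_iff)
  then have "contract3 a b c (\<lambda>u v w. \<Sum>p\<in>UNIV. \<Sum>q\<in>UNIV. \<Sum>p'\<in>UNIV. \<Sum>q'\<in>UNIV. s p q * s p' q' *
          (tens3 (circ sc pr (?e p) (?e p')) (?e q) (?e q') u v w
         + tens3 (?e p') (?e p) (odot sc pr (?e q) (?e q')) u v w
         + tens3 (?e p) (pr (?e q) (?e p')) (?e q') u v w)) = 0"
    by (simp only: contract3_zero)
  then show ?thesis
    by (simp only: contract3_sum contract3_cmult contract3_add contract3_tens3 dpair_ebasis)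
qed

locale bilinear_ops =
  fixes sc pr :: "('n::finite \<Rightarrow> 'k::field) \<Rightarrow> ('n \<Rightarrow> 'k) \<Rightarrow> ('n \<Rightarrow> 'k)"
  assumes bilinear_sc: "bilinear_op sc" and bilinear_pr: "bilinear_op pr"
begin

lemmas dpair_expand_ops = Lstar_def Lodot_def circ_def odot_def vector_ops_eq_fun_ops
  dpair_add_right dpair_diff_right dpair_uminus_right

context
  fixes r :: "'n \<Rightarrow> 'n \<Rightarrow> 'k"
  assumes invariant: "invariant sc pr r" and symmetric: "flip r = r"
begin

lemma invariant_dpair_Lstar: "dpair b (Lstar sc pr x (Tmap r a)) = dpair a (sc x (Tmap r b))"
proof -
  have "dpair b (Lstar sc pr x (Tmap r a))
      = (\<Sum>u\<in>UNIV. \<Sum>v\<in>UNIV. a u * b v * tensor_map id (Lstar sc pr x) r u v)"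
    by (rule contract_tensor_map_id_left[symmetric, OF lin_map_Lstar[OF bilinear_sc bilinear_pr]])
  also have "\<dots> = (\<Sum>u\<in>UNIV. \<Sum>v\<in>UNIV. a u * b v * tensor_map (sc x) id r u v)"
    using invariant unfolding invariant_def by auto
  also have "\<dots> = dpair a (sc x (Tmap r b))"
    using contract_tensor_map_id_right[OF bilinear_op_lin_map(2)[OF bilinear_sc]] by (simp add: symmetric)
  finally show ?thesis .
qed

lemma invariant_dpair_circ: "dpair a (circ sc pr x (Tmap r b)) = dpair b (Lodot sc pr x (Tmap r a))"
proof -
  have "dpair a (circ sc pr x (Tmap r b))
      = (\<Sum>u\<in>UNIV. \<Sum>v\<in>UNIV. a u * b v * tensor_map (circ sc pr x) id r u v)"
    using contract_tensor_map_id_right[OF bilinear_op_lin_map(2)[OF bilinear_op_circ[OF bilinear_sc bilinear_pr]]]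
    by (simp add: symmetric)
  also have "\<dots> = (\<Sum>u\<in>UNIV. \<Sum>v\<in>UNIV. a u * b v * tensor_map id (Lodot sc pr x) r u v)"
    using invariant unfolding invariant_def by auto
  also have "\<dots> = dpair b (Lodot sc pr x (Tmap r a))"
    by (rule contract_tensor_map_id_left[OF lin_map_Lodot[OF bilinear_sc bilinear_pr]])
  finally show ?thesis .
qed

lemma invariant_dpair_prec: "dpair g (pr (Tmap r a) y) = - dpair a (circ sc pr (Tmap r g) y)"
  using invariant_dpair_circ[of a y g] invariant_dpair_Lstar[of a y g]
  by (simp add: dpair_expand_ops; algebra)

lemma invariant_dpair_succ_swap:
  assumes "surj (Tmap r)"
  shows "dpair g (sc (Tmap r a) w) = dpair a (sc (Tmap r g) w)"
proof -
  obtain w' where w': "w = Tmap r w'" using assms by (metis surjD)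
  show ?thesis
    using invariant_dpair_Lstar[of w' "Tmap r a" g] invariant_dpair_Lstar[of w' "Tmap r g" a]
    unfolding w' by (simp add: dpair_expand_ops algebra_simps)
qed

lemma invariant_dpair_succ_prec:
  assumes "surj (Tmap r)"
  shows "dpair z (sc (Tmap r t) y) + dpair z (pr y (Tmap r t)) + dpair t (pr y (Tmap r z)) = 0"
proof -
  obtain y' where y': "y = Tmap r y'" using assms by (metis surjD)
  have "dpair y' (circ sc pr (Tmap r t) (Tmap r z)) + dpair y' (circ sc pr (Tmap r z) (Tmap r t))
      = dpair z (sc (Tmap r t) (Tmap r y'))"
    using invariant_dpair_Lstar[of y' "Tmap r t" z] by (simp only: Lstar_def vector_ops_eq_fun_ops dpair_add_right)
  then show ?thesis
    unfolding y' invariant_dpair_prec by (simp add: algebra_simps)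
qed

end

lemma APN_YBE_dpair:
  assumes "APN_YBE sc pr s"
  shows "dpair a (circ sc pr (Tmap (flip s) b) (Tmap (flip s) c)) + dpair c (odot sc pr (Tmap s b) (Tmap s a))
    + dpair b (pr (Tmap s a) (Tmap (flip s) c)) = 0"
proof -
  let ?e = "ebasis :: 'n \<Rightarrow> 'n \<Rightarrow> 'k"
  have circ: "dpair a (circ sc pr (Tmap (flip s) b) (Tmap (flip s) c))
      = (\<Sum>p\<in>UNIV. \<Sum>q\<in>UNIV. \<Sum>p'\<in>UNIV. \<Sum>q'\<in>UNIV. s p q * s p' q' * (dpair a (circ sc pr (?e p) (?e p')) * b q * c q'))"
    unfolding dpair_bilinear_op[OF bilinear_op_circ[OF bilinear_sc bilinear_pr], of a "Tmap (flip s) b"] Tmap_flip_apply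
      sum2_product_sums
    by (simp add: mult_ac)
  have "dpair c (odot sc pr (Tmap s b) (Tmap s a))
      = (\<Sum>q\<in>UNIV. \<Sum>p\<in>UNIV. \<Sum>q'\<in>UNIV. \<Sum>p'\<in>UNIV. s p q * b p * (s p' q' * a p') * dpair c (odot sc pr (?e q) (?e q')))"
    unfolding dpair_bilinear_op[OF bilinear_op_odot[OF bilinear_sc bilinear_pr], of c "Tmap s b"] Tmap_apply
    by (rule sum2_product_sums)
  also have "\<dots> = (\<Sum>p\<in>UNIV. \<Sum>q\<in>UNIV. \<Sum>q'\<in>UNIV. \<Sum>p'\<in>UNIV. s p q * b p * (s p' q' * a p') * dpair c (odot sc pr (?e q) (?e q')))"
    by (rule sum.swap)
  also have "\<dots> = (\<Sum>p\<in>UNIV. \<Sum>q\<in>UNIV. \<Sum>p'\<in>UNIV. \<Sum>q'\<in>UNIV. s p q * b p * (s p' q' * a p') * dpair c (odot sc pr (?e q) (?e q')))"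
    by (rule sum.cong[OF refl], rule sum.cong[OF refl], rule sum.swap)
  finally have odot: "dpair c (odot sc pr (Tmap s b) (Tmap s a))
      = (\<Sum>p\<in>UNIV. \<Sum>q\<in>UNIV. \<Sum>p'\<in>UNIV. \<Sum>q'\<in>UNIV. s p q * s p' q' * (a p' * b p * dpair c (odot sc pr (?e q) (?e q'))))"
    by (simp add: mult_ac)
  have "dpair b (pr (Tmap s a) (Tmap (flip s) c))
      = (\<Sum>q\<in>UNIV. \<Sum>p\<in>UNIV. \<Sum>p'\<in>UNIV. \<Sum>q'\<in>UNIV. s p q * a p * (s p' q' * c q') * dpair b (pr (?e q) (?e p')))"
    unfolding dpair_bilinear_op[OF bilinear_pr, of b "Tmap s a"] Tmap_apply[of s] Tmap_flip_apply
    by (rule sum2_product_sums)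
  also have "\<dots> = (\<Sum>p\<in>UNIV. \<Sum>q\<in>UNIV. \<Sum>p'\<in>UNIV. \<Sum>q'\<in>UNIV. s p q * a p * (s p' q' * c q') * dpair b (pr (?e q) (?e p')))"
    by (rule sum.swap)
  finally have prec: "dpair b (pr (Tmap s a) (Tmap (flip s) c))
      = (\<Sum>p\<in>UNIV. \<Sum>q\<in>UNIV. \<Sum>p'\<in>UNIV. \<Sum>q'\<in>UNIV. s p q * s p' q' * (a p * dpair b (pr (?e q) (?e p')) * c q'))"
    by (simp add: mult_ac)
  show ?thesis
    using APN_YBE_contracted[OF assms, of a b c] unfolding circ odot prec
    by (simp only: distrib_left sum.distrib)
qed

lemma dpair_dual_succ:
  "dpair (dual_succ sc pr s a b) x = - dpair a (sc x (Tmap (flip s) b)) + dpair b (Lstar sc pr (Tmap s a) x)"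
proof -
  have "lin_map (Rop sc (Tmap (flip s) b))"
    unfolding Rop_def by (rule bilinear_op_lin_map(1)[OF bilinear_sc])
  moreover have "lin_map (Lstar sc pr (Tmap s a))"
    by (rule lin_map_Lstar[OF bilinear_sc bilinear_pr])
  ultimately show ?thesis
    by (simp add: dual_succ_def vector_ops_eq_fun_ops dpair_diff_left dpair_dual_rep Rop_def)
qed

lemma dpair_dual_prec:
  "dpair (dual_prec sc pr s a b) x = - dpair b (odot sc pr x (Tmap s a)) + dpair a (circ sc pr x (Tmap (flip s) b))"
proof -
  have "lin_map (Rodot sc pr (Tmap s a))"
    unfolding Rodot_def by (rule bilinear_op_lin_map(1)[OF bilinear_op_odot[OF bilinear_sc bilinear_pr]])
  moreover have "lin_map (Rcirc sc pr (Tmap (flip s) b))"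
    unfolding Rcirc_def by (rule bilinear_op_lin_map(1)[OF bilinear_op_circ[OF bilinear_sc bilinear_pr]])
  ultimately show ?thesis
    by (simp add: dual_prec_def vector_ops_eq_fun_ops dpair_diff_left dpair_dual_rep Rodot_def Rcirc_def)
qed

end


section \<open>The homomorphisms T_s and -T_\<tau>(s)\<close>

locale factorizable_ops = bilinear_ops sc pr
  for sc pr :: "('n::finite \<Rightarrow> 'k::field) \<Rightarrow> ('n \<Rightarrow> 'k) \<Rightarrow> ('n \<Rightarrow> 'k)" +
  fixes s :: "'n \<Rightarrow> 'n \<Rightarrow> 'k"
  assumes factorizable: "factorizable sc pr s"
begin

abbreviation r :: "'n \<Rightarrow> 'n \<Rightarrow> 'k" where
  "r \<equiv> tsum2 s (flip s)"

lemma bij_Tmap_r: "bij (Tmap r)"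
  using factorizable unfolding factorizable_def by blast

lemma surj_Tmap_r: "surj (Tmap r)"
  using bij_Tmap_r by (rule bij_is_surj)

lemma APN_YBE_s: "APN_YBE sc pr s"
  using factorizable unfolding factorizable_def by blast

lemma invariant_r: "invariant sc pr r"
  using factorizable unfolding factorizable_def by blast

lemmas dpair_Lstar_r = invariant_dpair_Lstar[OF invariant_r flip_tsum2_flip]
  and dpair_prec_r = invariant_dpair_prec[OF invariant_r flip_tsum2_flip]
  and dpair_succ_swap_r = invariant_dpair_succ_swap[OF invariant_r flip_tsum2_flip surj_Tmap_r]
  and dpair_succ_prec_r = invariant_dpair_succ_prec[OF invariant_r flip_tsum2_flip surj_Tmap_r]
  and APN_YBE_dpair_s = APN_YBE_dpair[OF APN_YBE_s]

lemmas hom_expand = Tmap_tsum2 bilinear_op_add[OF bilinear_sc] bilinear_op_add[OF bilinear_pr]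
  bilinear_op_uminus[OF bilinear_sc] bilinear_op_uminus[OF bilinear_pr] dpair_expand_ops

lemma Tmap_dual_succ: "Tmap s (dual_succ sc pr s a b) = sc (Tmap s a) (Tmap s b)"
proof (rule dpair_ext)
  fix t
  have "dpair b (Lstar sc pr (Tmap (flip s) t) (Tmap r a)) = dpair a (sc (Tmap (flip s) t) (Tmap r b))"
    by (rule dpair_Lstar_r)
  moreover have "dpair b (circ sc pr (Tmap (flip s) t) (Tmap (flip s) a)) + dpair a (odot sc pr (Tmap s t) (Tmap s b))
      + dpair t (pr (Tmap s b) (Tmap (flip s) a)) = 0"
    by (rule APN_YBE_dpair_s)
  moreover have "dpair b (circ sc pr (Tmap (flip s) a) (Tmap (flip s) t)) + dpair t (odot sc pr (Tmap s a) (Tmap s b))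
      + dpair a (pr (Tmap s b) (Tmap (flip s) t)) = 0"
    by (rule APN_YBE_dpair_s)
  moreover have "dpair a (sc (Tmap r t) (Tmap s b)) + dpair a (pr (Tmap s b) (Tmap r t))
      + dpair t (pr (Tmap s b) (Tmap r a)) = 0"
    by (rule dpair_succ_prec_r)
  ultimately show "dpair t (Tmap s (dual_succ sc pr s a b)) = dpair t (sc (Tmap s a) (Tmap s b))"
    unfolding dpair_Tmap[of t s] dpair_dual_succ by (simp only: hom_expand) algebra
qed

lemma Tmap_dual_prec: "Tmap s (dual_prec sc pr s a b) = pr (Tmap s a) (Tmap s b)"
proof (rule dpair_ext)
  fix t
  have "dpair a (circ sc pr (Tmap (flip s) b) (Tmap (flip s) t)) + dpair t (odot sc pr (Tmap s b) (Tmap s a))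
      + dpair b (pr (Tmap s a) (Tmap (flip s) t)) = 0"
    by (rule APN_YBE_dpair_s)
  moreover have "dpair t (sc (Tmap s b) (Tmap s a)) = - dpair b (sc (Tmap (flip s) t) (Tmap (flip s) a))
      + dpair a (Lstar sc pr (Tmap s b) (Tmap (flip s) t))"
    unfolding Tmap_dual_succ[symmetric] dpair_Tmap[of t s] dpair_dual_succ ..
  moreover have "dpair a (Lstar sc pr (Tmap (flip s) t) (Tmap r b)) = dpair b (sc (Tmap (flip s) t) (Tmap r a))"
    by (rule dpair_Lstar_r)
  ultimately show "dpair t (Tmap s (dual_prec sc pr s a b)) = dpair t (pr (Tmap s a) (Tmap s b))"
    unfolding dpair_Tmap[of t s] dpair_dual_prec by (simp only: hom_expand) algebra
qed

lemma Tmap_flip_dual_succ: "Tmap (flip s) (dual_succ sc pr s a b) = - sc (Tmap (flip s) a) (Tmap (flip s) b)"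
proof (rule dpair_ext)
  fix t
  have "dpair t (sc (Tmap s a) (Tmap s b)) = - dpair a (sc (Tmap (flip s) t) (Tmap (flip s) b))
      + dpair b (Lstar sc pr (Tmap s a) (Tmap (flip s) t))"
    unfolding Tmap_dual_succ[symmetric] dpair_Tmap[of t s] dpair_dual_succ ..
  moreover have "dpair b (Lstar sc pr (Tmap s a) (Tmap r t)) = dpair t (sc (Tmap s a) (Tmap r b))"
    by (rule dpair_Lstar_r)
  moreover have "dpair a (sc (Tmap r t) (Tmap (flip s) b)) = dpair t (sc (Tmap r a) (Tmap (flip s) b))"
    by (rule dpair_succ_swap_r)
  ultimately show "dpair t (Tmap (flip s) (dual_succ sc pr s a b)) = dpair t (- sc (Tmap (flip s) a) (Tmap (flip s) b))"
    unfolding dpair_Tmap[of t "flip s"] flip_flip dpair_dual_succ by (simp only: hom_expand) algebra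
qed

lemma Tmap_flip_dual_prec: "Tmap (flip s) (dual_prec sc pr s a b) = - pr (Tmap (flip s) a) (Tmap (flip s) b)"
proof (rule dpair_ext)
  fix t
  have "dpair t (pr (Tmap s a) (Tmap s b)) = - dpair b (odot sc pr (Tmap (flip s) t) (Tmap s a))
      + dpair a (circ sc pr (Tmap (flip s) t) (Tmap (flip s) b))"
    unfolding Tmap_dual_prec[symmetric] dpair_Tmap[of t s] dpair_dual_prec ..
  moreover have "dpair t (pr (Tmap r a) (Tmap (flip s) b)) = - dpair a (circ sc pr (Tmap r t) (Tmap (flip s) b))"
    by (rule dpair_prec_r)
  moreover have "dpair b (sc (Tmap r t) (Tmap s a)) + dpair b (pr (Tmap s a) (Tmap r t))
      + dpair t (pr (Tmap s a) (Tmap r b)) = 0"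
    by (rule dpair_succ_prec_r)
  ultimately show "dpair t (Tmap (flip s) (dual_prec sc pr s a b)) = dpair t (- pr (Tmap (flip s) a) (Tmap (flip s) b))"
    unfolding dpair_Tmap[of t "flip s"] flip_flip dpair_dual_prec by (simp only: hom_expand) algebra
qed

end

section \<open>The image of T_s \<oplus> T_\<tau>(s)\<close>

lemma range_APN_subalgebra_dsum:
  assumes add: "\<And>x y. phi (vadd x y) = padd (phi x) (phi y)"
    and smul: "\<And>c x. phi (smul c x) = psmul c (phi x)"
    and succ: "\<And>a b. phi (sc' a b) = dsum_op sc (phi a) (phi b)"
    and prec: "\<And>a b. phi (pr' a b) = dsum_op pr (phi a) (phi b)"
  shows "APN_subalgebra_dsum sc pr (range phi)"
  unfolding APN_subalgebra_dsum_def
proof (intro conjI ballI allI)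
  have "psmul 0 (phi x) = (vzero, vzero)" for x
    by (simp add: psmul_def smul_def vzero_def)
  then show "(vzero, vzero) \<in> range phi"
    by (metis smul rangeI)
next
  fix p q assume "p \<in> range phi" "q \<in> range phi"
  then obtain a b where ab: "p = phi a" "q = phi b" by blast
  show "padd p q \<in> range phi" unfolding ab add[symmetric] by (rule rangeI)
  show "dsum_op sc p q \<in> range phi" unfolding ab succ[symmetric] by (rule rangeI)
  show "dsum_op pr p q \<in> range phi" unfolding ab prec[symmetric] by (rule rangeI)
next
  fix c p assume "p \<in> range phi"
  then show "psmul c p \<in> range phi"
    by (metis smul rangeE rangeI)
qed

lemma APN_iso_dual_onto_range:
  assumes "inj phi"
    and "\<And>x y. phi (vadd x y) = padd (phi x) (phi y)"
    and "\<And>c x. phi (smul c x) = psmul c (phi x)"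
    and "\<And>a b. phi (dual_succ sc pr s a b) = dsum_op sc (phi a) (phi b)"
    and "\<And>a b. phi (dual_prec sc pr s a b) = dsum_op pr (phi a) (phi b)"
  shows "APN_iso_dual_onto sc pr s (range phi)"
  unfolding APN_iso_dual_onto_def
  by (intro exI[of _ phi]) (simp add: assms inj_on_imp_bij_betw)

lemma ex1_decomposition_in_range:
  assumes "bij (\<lambda>z. d (phi z))"
  shows "\<forall>x. \<exists>!p. p \<in> range phi \<and> x = d p"
proof
  fix x
  have inj: "inj (\<lambda>z. d (phi z))" and surj: "surj (\<lambda>z. d (phi z))"
    using assms by (simp_all add: bij_def)
  obtain z where z: "x = d (phi z)"
    using surj by (metis surjD)
  show "\<exists>!p. p \<in> range phi \<and> x = d p"
  proof (rule ex1I[of _ "phi z"])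
    fix p assume "p \<in> range phi \<and> x = d p"
    then obtain w where "p = phi w" "d (phi w) = d (phi z)" using z by blast
    then show "p = phi z"
      using injD[OF inj] by blast
  qed (use z in blast)
qed

definition Tmap_pair :: "('n::finite \<Rightarrow> 'n \<Rightarrow> 'k::field) \<Rightarrow> ('n \<Rightarrow> 'k) \<Rightarrow> ('n \<Rightarrow> 'k) \<times> ('n \<Rightarrow> 'k)" where
  "Tmap_pair s = (\<lambda>zeta. (Tmap s zeta, vneg (Tmap (flip s) zeta)))"

lemma Tmap_pair_add: "Tmap_pair s (vadd x y) = padd (Tmap_pair s x) (Tmap_pair s y)"
  by (simp add: Tmap_pair_def padd_def vector_ops_eq_fun_ops Tmap_add)

lemma Tmap_pair_smul: "Tmap_pair s (smul c x) = psmul c (Tmap_pair s x)"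
  by (simp add: Tmap_pair_def psmul_def smul_def vector_ops_eq_fun_ops Tmap_smul fun_eq_iff)

lemma Tmap_tsum2_flip_eq_diff:
  "Tmap (tsum2 s (flip s)) zeta = vsub (fst (Tmap_pair s zeta)) (snd (Tmap_pair s zeta))"
  by (simp add: Tmap_pair_def Tmap_tsum2 vector_ops_eq_fun_ops)

context factorizable_ops
begin

lemma Tmap_pair_dual_succ: "Tmap_pair s (dual_succ sc pr s a b) = dsum_op sc (Tmap_pair s a) (Tmap_pair s b)"
  by (simp add: Tmap_pair_def dsum_op_def vector_ops_eq_fun_ops Tmap_dual_succ Tmap_flip_dual_succ
      bilinear_op_uminus[OF bilinear_sc])

lemma Tmap_pair_dual_prec: "Tmap_pair s (dual_prec sc pr s a b) = dsum_op pr (Tmap_pair s a) (Tmap_pair s b)"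
  by (simp add: Tmap_pair_def dsum_op_def vector_ops_eq_fun_ops Tmap_dual_prec Tmap_flip_dual_prec
      bilinear_op_uminus[OF bilinear_pr])

lemma bij_diff_Tmap_pair: "bij (\<lambda>zeta. vsub (fst (Tmap_pair s zeta)) (snd (Tmap_pair s zeta)))"
  using bij_Tmap_r by (simp add: Tmap_tsum2_flip_eq_diff[symmetric])

lemma inj_Tmap_pair: "inj (Tmap_pair s)"
  using inj_on_imageI2[of "\<lambda>p. vsub (fst p) (snd p)" "Tmap_pair s"] bij_diff_Tmap_pair
  by (simp add: bij_def comp_def)

end

theorem mainTheorem18:
  fixes sc pr :: "('n::finite \<Rightarrow> 'k::field) \<Rightarrow> ('n \<Rightarrow> 'k) \<Rightarrow> ('n \<Rightarrow> 'k)"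
    and s :: "'n \<Rightarrow> 'n \<Rightarrow> 'k"
  assumes "anti_pre_Novikov sc pr"
    and "factorizable sc pr s"
  shows "APN_subalgebra_dsum sc pr (range (\<lambda>zeta. (Tmap s zeta, vneg (Tmap (flip s) zeta))))
    \<and> APN_iso_dual_onto sc pr s (range (\<lambda>zeta. (Tmap s zeta, vneg (Tmap (flip s) zeta))))
    \<and> (\<forall>x. \<exists>!p. p \<in> range (\<lambda>zeta. (Tmap s zeta, vneg (Tmap (flip s) zeta))) \<and> x = vsub (fst p) (snd p))"
proof -
  interpret factorizable_ops sc pr s
    using assms by unfold_locales (simp_all add: anti_pre_Novikov_bilinear)
  have "APN_iso_dual_onto sc pr s (range (Tmap_pair s))"
    using inj_Tmap_pair Tmap_pair_add Tmap_pair_smul Tmap_pair_dual_succ Tmap_pair_dual_prec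
    by (rule APN_iso_dual_onto_range)
  moreover have "APN_subalgebra_dsum sc pr (range (Tmap_pair s))"
    by (rule range_APN_subalgebra_dsum[where phi = "Tmap_pair s"
          and sc' = "dual_succ sc pr s" and pr' = "dual_prec sc pr s"])
      (simp_all only: Tmap_pair_add Tmap_pair_smul Tmap_pair_dual_succ Tmap_pair_dual_prec)
  moreover have "\<forall>x. \<exists>!p. p \<in> range (Tmap_pair s) \<and> x = vsub (fst p) (snd p)"
    using bij_diff_Tmap_pair by (rule ex1_decomposition_in_range)
  ultimately show ?thesis
    unfolding Tmap_pair_def by blast
qed

end
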